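(* Let $G$ be a forest. Then the independence complex $\Delta(G)$ is sortable if and only if each connected component (tree) of $G$ is a path graph.
   Context: The independence complex $\Delta(G)$ is the simplicial complex of all independent sets of $G$. For finite $F,G\subset\mathbb{N}$ with $|F|=r,|G|=s$, write $\mathbf{x}^F\mathbf{x}^G=x_{i_1}\cdots x_{i_{r+s}}$ with $i_1\le\cdots\le i_{r+s}$ (where $\mathbf{x}^F=\prod_{i\in F}x_i$) and set $\mathrm{sort}(F,G)=(\{i_k:k\text{ odd}\},\{i_k:k\text{ even}\})$. A simplicial complex $\Delta$ with $V(\Delta)\subset\mathbb{N}$ is sortable with respect to the given labeling if $\mathrm{sort}(F,G)\in\Delta\times\Delta$ for all $F,G\in\Delta$; $\Delta$ is sortable if it is sortable with respect to some labeling of its vertices by distinct integers. *)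

theory Defs
  imports Main "HOL-Library.Multiset"
begin

definition simple_graph :: "'a set \<Rightarrow> 'a set set \<Rightarrow> bool" where
  "simple_graph V E \<longleftrightarrow> finite V \<and> (\<forall>e\<in>E. \<exists>u v. e = {u, v} \<and> u \<noteq> v \<and> u \<in> V \<and> v \<in> V)"

definition adj :: "'a set set \<Rightarrow> 'a \<Rightarrow> 'a \<Rightarrow> bool" where
  "adj E u v \<longleftrightarrow> {u, v} \<in> E"

definition is_cycle :: "'a set \<Rightarrow> 'a set set \<Rightarrow> 'a list \<Rightarrow> bool" where
  "is_cycle V E xs \<longleftrightarrow> length xs \<ge> 3 \<and> distinct xs \<and> set xs \<subseteq> V
     \<and> (\<forall>i. Suc i < length xs \<longrightarrow> adj E (xs ! i) (xs ! Suc i))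
     \<and> adj E (last xs) (hd xs)"

definition forest :: "'a set \<Rightarrow> 'a set set \<Rightarrow> bool" where
  "forest V E \<longleftrightarrow> simple_graph V E \<and> \<not> (\<exists>xs. is_cycle V E xs)"

definition reachable :: "'a set \<Rightarrow> 'a set set \<Rightarrow> 'a \<Rightarrow> 'a \<Rightarrow> bool" where
  "reachable V E u v \<longleftrightarrow> u \<in> V \<and> v \<in> V \<and> (\<lambda>x y. x \<in> V \<and> y \<in> V \<and> adj E x y)\<^sup>*\<^sup>* u v"

definition components :: "'a set \<Rightarrow> 'a set set \<Rightarrow> 'a set set" where
  "components V E = {{w. reachable V E v w} | v. v \<in> V}"

text \<open>The induced subgraph on C is a path graph P_n (n = |C| >= 1):
  C can be listed without repetition so that two vertices of C are adjacent
  iff they are consecutive in the list.\<close>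
definition is_path_graph :: "'a set set \<Rightarrow> 'a set \<Rightarrow> bool" where
  "is_path_graph E C \<longleftrightarrow> (\<exists>xs. xs \<noteq> [] \<and> distinct xs \<and> set xs = C \<and>
     (\<forall>i j. i < length xs \<longrightarrow> j < length xs \<longrightarrow>
        (adj E (xs ! i) (xs ! j) \<longleftrightarrow> i = Suc j \<or> j = Suc i)))"

definition indep_complex :: "'a set \<Rightarrow> 'a set set \<Rightarrow> 'a set set" where
  "indep_complex V E = {F. F \<subseteq> V \<and> (\<forall>u\<in>F. \<forall>v\<in>F. \<not> adj E u v)}"

text \<open>sort(F,G): sort the multiset union, take entries at odd (1-based) positions
  and at even (1-based) positions.\<close>
definition sort_pair :: "nat set \<Rightarrow> nat set \<Rightarrow> nat set \<times> nat set" where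
  "sort_pair F G = (let L = sorted_list_of_multiset (mset_set F + mset_set G) in
     ({L ! k | k. k < length L \<and> even k}, {L ! k | k. k < length L \<and> odd k}))"

definition sortable_wrt :: "nat set set \<Rightarrow> bool" where
  "sortable_wrt \<Delta> \<longleftrightarrow> (\<forall>F\<in>\<Delta>. \<forall>G\<in>\<Delta>. fst (sort_pair F G) \<in> \<Delta> \<and> snd (sort_pair F G) \<in> \<Delta>)"

definition sortable :: "'a set \<Rightarrow> 'a set set \<Rightarrow> bool" where
  "sortable V \<Delta> \<longleftrightarrow> (\<exists>f :: 'a \<Rightarrow> nat. inj_on f V \<and> sortable_wrt ((\<lambda>F. f ` F) ` \<Delta>))"

end

theory Submission
  imports Defs
begin

text \<open>
  If a vertex c has three neighbours x, y, z (pairwise non-adjacent, as a forest has no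
  triangles), no labeling is sortable: sorting {c} against {x, y, z} gives four distinct labels,
  and the label two places away from c falls into the same half as c, so that half contains an
  edge. A forest of maximum degree two has path components, since a longest path in a component
  is closed under adjacency. Conversely, listing the paths one after another and labeling every
  vertex by its position makes each edge join labels a and a + 1. If a and a + 1 end up in the
  same half of sort(F, G), their positions in the merged sorted list differ by at least two, so
  the entry in between repeats a or a + 1; that value lies in both F and G, hence a and a + 1
  both lie in F or both in G, and they are not adjacent.
\<close>

lemma adj_commute: "adj E u v \<longleftrightarrow> adj E v u"
  by (simp add: adj_def insert_commute)

lemma simple_graph_adjD:
  assumes "simple_graph V E" "adj E u v"
  shows "u \<in> V" "v \<in> V" "u \<noteq> v"
proof -
  obtain a b where "{u, v} = {a, b}" "a \<noteq> b" "a \<in> V" "b \<in> V"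
    using assms unfolding simple_graph_def adj_def by blast
  then show "u \<in> V" "v \<in> V" "u \<noteq> v" by (auto simp: doubleton_eq_iff)
qed

definition reach_rel :: "'a set \<Rightarrow> 'a set set \<Rightarrow> ('a \<times> 'a) set" where
  "reach_rel V E = {(u, w). reachable V E u w}"

lemma reachable_sym: "reachable V E u w \<Longrightarrow> reachable V E w u"
proof -
  have "symp (\<lambda>x y. x \<in> V \<and> y \<in> V \<and> adj E x y)" by (rule sympI) (simp add: adj_commute)
  then show "reachable V E u w \<Longrightarrow> reachable V E w u"
    unfolding reachable_def by (blast dest: sympD[OF symp_rtranclp])
qed

lemma equiv_reach_rel: "equiv V (reach_rel V E)"
proof (rule equivI)
  show "sym (reach_rel V E)"
    unfolding reach_rel_def by (rule symI) (simp add: reachable_sym)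
  show "trans (reach_rel V E)"
    unfolding reach_rel_def reachable_def by (rule transI) (auto intro: rtranclp_trans)
qed (auto simp: reach_rel_def reachable_def refl_on_def)

lemma components_eq_quotient: "components V E = V // reach_rel V E"
  unfolding components_def quotient_def reach_rel_def by auto

lemma finite_components: "finite V \<Longrightarrow> finite (components V E)"
  unfolding components_eq_quotient
  by (rule finite_quotient) (auto simp: reach_rel_def reachable_def)

lemma Union_components: "\<Union>(components V E) = V"
  unfolding components_eq_quotient by (rule Union_quotient[OF equiv_reach_rel])

lemma component_subset: "C \<in> components V E \<Longrightarrow> C \<subseteq> V"
  unfolding components_eq_quotient by (rule in_quotient_imp_subset[OF equiv_reach_rel])

lemma components_disjoint:
  "C \<in> components V E \<Longrightarrow> C' \<in> components V E \<Longrightarrow> C \<noteq> C' \<Longrightarrow> C \<inter> C' = {}"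
  unfolding components_eq_quotient using quotient_disj[OF equiv_reach_rel] by blast

lemma component_adj_closed:
  assumes "simple_graph V E" "C \<in> components V E" "x \<in> C" "adj E x y"
  shows "y \<in> C"
proof -
  obtain v where C: "C = {w. reachable V E v w}"
    using assms(2) unfolding components_def by blast
  have "reachable V E v x" "y \<in> V" "x \<in> V"
    using assms C simple_graph_adjD[OF assms(1,4)] by auto
  then have "reachable V E v y"
    using assms(4) unfolding reachable_def by (auto intro: rtranclp.rtrancl_into_rtrancl)
  then show ?thesis using C by simp
qed

lemma reachable_adj_closed:
  assumes "reachable V E u w" "u \<in> S" "\<And>x y. x \<in> S \<Longrightarrow> adj E x y \<Longrightarrow> y \<in> S"
  shows "w \<in> S"
proof -
  have "(\<lambda>x y. x \<in> V \<and> y \<in> V \<and> adj E x y)\<^sup>*\<^sup>* u w"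
    using assms(1) unfolding reachable_def by blast
  then show ?thesis using assms(2,3) by induction auto
qed

lemma forest_walk_induced:
  assumes F: "forest V E" and xs: "distinct xs" "set xs \<subseteq> V" "successively (adj E) xs"
    and i: "i < length xs" and j: "j < length xs"
  shows "adj E (xs ! i) (xs ! j) \<longleftrightarrow> i = Suc j \<or> j = Suc i"
proof -
  have walk: "adj E (xs ! k) (xs ! Suc k)" if "Suc k < length xs" for k
    using xs(3) that by (rule successively_nth)
  have chord: "b = Suc a" if ab: "adj E (xs ! a) (xs ! b)" "a < b" "b < length xs" for a b
  proof (rule ccontr)
    assume "b \<noteq> Suc a"
    define ys where "ys = take (b - a + 1) (drop a xs)"
    have len: "length ys = b - a + 1" using ab unfolding ys_def by auto
    have nth: "ys ! k = xs ! (a + k)" if "k < length ys" for k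
      using that ab len unfolding ys_def by auto
    have "is_cycle V E ys"
      unfolding is_cycle_def
    proof (intro conjI allI impI)
      show "3 \<le> length ys" using len ab \<open>b \<noteq> Suc a\<close> by auto
      show "distinct ys" "set ys \<subseteq> V"
        unfolding ys_def using xs by (auto dest: in_set_takeD in_set_dropD)
      show "adj E (ys ! k) (ys ! Suc k)" if "Suc k < length ys" for k
        using that walk[of "a + k"] nth[of k] nth[of "Suc k"] len ab by auto
      have "ys \<noteq> []" using len by auto
      then show "adj E (last ys) (hd ys)"
        using nth[of "length ys - 1"] nth[of 0] len ab
        by (simp add: last_conv_nth hd_conv_nth adj_commute)
    qed
    then show False using F unfolding forest_def by blast
  qed
  show ?thesis
  proof
    assume a: "adj E (xs ! i) (xs ! j)"
    have "simple_graph V E" using F unfolding forest_def by blast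
    from simple_graph_adjD(3)[OF this a] have "xs ! i \<noteq> xs ! j" .
    then consider "i < j" | "j < i" by fastforce
    then show "i = Suc j \<or> j = Suc i"
    proof cases
      case 1
      then show ?thesis using chord[OF a 1 j] by simp
    next
      case 2
      then show ?thesis using chord[OF adj_commute[THEN iffD1, OF a] 2 i] by simp
    qed
  next
    show "adj E (xs ! i) (xs ! j)" if "i = Suc j \<or> j = Suc i"
      using that walk i j by (auto simp: adj_commute)
  qed
qed

lemma forest_no_triangle:
  assumes F: "forest V E" and "adj E c x" "adj E c y"
  shows "\<not> adj E x y"
proof
  assume xy: "adj E x y"
  have sg: "simple_graph V E" using F unfolding forest_def by blast
  have "distinct [x, c, y]" "set [x, c, y] \<subseteq> V"
    using simple_graph_adjD[OF sg assms(2)] simple_graph_adjD[OF sg assms(3)]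
      simple_graph_adjD[OF sg xy] by auto
  moreover have "successively (adj E) [x, c, y]" using assms(2,3) by (simp add: adj_commute)
  ultimately show False using forest_walk_induced[OF F, of "[x, c, y]" 0 2] xy by simp
qed

lemma longest_walk_adj_closed:
  assumes deg: "\<And>c x y z. adj E c x \<Longrightarrow> adj E c y \<Longrightarrow> adj E c z \<Longrightarrow> x = y \<or> x = z \<or> y = z"
    and xs: "distinct xs" "successively (adj E) xs"
    and longest: "\<And>ys. distinct ys \<Longrightarrow> successively (adj E) ys \<Longrightarrow> set ys = insert y (set xs)
      \<Longrightarrow> length ys \<le> length xs"
    and x: "x \<in> set xs" and xy: "adj E x y"
  shows "y \<in> set xs"
proof (rule ccontr)
  assume y: "y \<notin> set xs"
  obtain i where i: "i < length xs" "xs ! i = x" using x by (auto simp: in_set_conv_nth)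
  then have "xs \<noteq> []" by auto
  consider "i = 0" | "i = length xs - 1" | "0 < i" "i < length xs - 1" using i by linarith
  then show False
  proof cases
    case 1
    have "successively (adj E) (y # xs)"
      using xs(2) xy i 1 by (auto simp: successively_Cons hd_conv_nth adj_commute)
    then show False using longest[of "y # xs"] xs(1) y by simp
  next
    case 2
    have "successively (adj E) (xs @ [y])"
      using xs(2) xy i 2 \<open>xs \<noteq> []\<close> by (auto simp: successively_append_iff last_conv_nth)
    then show False using longest[of "xs @ [y]"] xs(1) y by simp
  next
    case 3
    have "adj E x (xs ! (i - 1))" "adj E x (xs ! Suc i)"
      using successively_nth[OF xs(2), of "i - 1"] successively_nth[OF xs(2), of i] i 3
      by (simp_all add: adj_commute)
    moreover have "xs ! (i - 1) \<noteq> xs ! Suc i" using xs(1) i 3 by (simp add: nth_eq_iff_index_eq)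
    moreover have "y \<noteq> xs ! (i - 1)" "y \<noteq> xs ! Suc i" using y i 3 by auto
    ultimately show False using deg xy by metis
  qed
qed

lemma forest_component_is_path_graph:
  assumes F: "forest V E"
    and deg: "\<And>c x y z. adj E c x \<Longrightarrow> adj E c y \<Longrightarrow> adj E c z \<Longrightarrow> x = y \<or> x = z \<or> y = z"
    and C: "C \<in> components V E"
  shows "is_path_graph E C"
proof -
  have sg: "simple_graph V E" using F unfolding forest_def by blast
  obtain v where v: "v \<in> V" "C = {w. reachable V E v w}"
    using C unfolding components_def by blast
  have CV: "C \<subseteq> V" using C by (rule component_subset)
  define walk where "walk xs \<longleftrightarrow> distinct xs \<and> set xs \<subseteq> C \<and> successively (adj E) xs" for xs
  have walk_v: "walk [v]" unfolding walk_def using v by (simp add: reachable_def)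
  have "length xs < Suc (card V)" if "walk xs" for xs
  proof -
    have "finite V" using sg unfolding simple_graph_def by blast
    moreover have "distinct xs" "set xs \<subseteq> V" using that CV unfolding walk_def by auto
    ultimately show ?thesis using distinct_card[of xs] card_mono[of V "set xs"] by simp
  qed
  then obtain xs where xs: "walk xs" and longest: "\<And>ys. walk ys \<Longrightarrow> length ys \<le> length xs"
    using ex_has_greatest_nat[of walk "[v]" length "Suc (card V)", OF walk_v] by blast
  have closed: "y \<in> set xs" if "x \<in> set xs" "adj E x y" for x y
  proof (rule longest_walk_adj_closed[OF deg _ _ _ that])
    have "y \<in> C" using component_adj_closed[OF sg C] that xs unfolding walk_def by blast
    then show "length ys \<le> length xs"
      if "distinct ys" "successively (adj E) ys" "set ys = insert y (set xs)" for ys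
      using that xs longest[of ys] unfolding walk_def by simp
  qed (use xs walk_def in simp_all)
  have "xs \<noteq> []" using longest[OF walk_v] by auto
  then obtain u where u: "u \<in> set xs" by fastforce
  then have "reachable V E v u" using xs v(2) unfolding walk_def by blast
  then have "reachable V E u v" by (rule reachable_sym)
  then have "v \<in> set xs" using u closed by (rule reachable_adj_closed)
  have "C \<subseteq> set xs"
  proof
    fix w assume "w \<in> C"
    then have "reachable V E v w" using v(2) by simp
    then show "w \<in> set xs" using \<open>v \<in> set xs\<close> closed by (rule reachable_adj_closed)
  qed
  then have "set xs = C" using xs unfolding walk_def by blast
  moreover have "distinct xs" "set xs \<subseteq> V" "successively (adj E) xs"
    using xs CV unfolding walk_def by auto
  ultimately show ?thesis
    unfolding is_path_graph_def using \<open>xs \<noteq> []\<close> forest_walk_induced[OF F] by blast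
qed


definition sort_merge :: "nat set \<Rightarrow> nat set \<Rightarrow> nat list" where
  "sort_merge F G = sorted_list_of_multiset (mset_set F + mset_set G)"

definition parity_part :: "'b list \<Rightarrow> bool \<Rightarrow> 'b set" where
  "parity_part L b = {L ! k | k. k < length L \<and> even k = b}"

lemma sortable_wrt_iff_parity_part:
  "sortable_wrt \<Delta> \<longleftrightarrow> (\<forall>F\<in>\<Delta>. \<forall>G\<in>\<Delta>. \<forall>b. parity_part (sort_merge F G) b \<in> \<Delta>)"
proof -
  have "sort_pair F G = (parity_part (sort_merge F G) True, parity_part (sort_merge F G) False)"
    for F G by (simp add: sort_pair_def sort_merge_def parity_part_def Let_def)
  then show ?thesis unfolding sortable_wrt_def by (metis (full_types) fst_conv snd_conv)
qed

lemma count_sort_merge: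
  "finite F \<Longrightarrow> finite G \<Longrightarrow>
    count (mset (sort_merge F G)) x = of_bool (x \<in> F) + of_bool (x \<in> G)"
  by (simp add: sort_merge_def count_mset_set')

lemma set_sort_merge: "finite F \<Longrightarrow> finite G \<Longrightarrow> set (sort_merge F G) = F \<union> G"
  by (simp add: sort_merge_def)

lemma parity_part_subset: "parity_part L b \<subseteq> set L"
  by (auto simp: parity_part_def)

lemma two_le_count_if_nth_eq:
  assumes "i < j" "j < length L" "L ! i = x" "L ! j = x"
  shows "2 \<le> count (mset L) x"
proof -
  have "take j L ! i = x" "drop j L ! 0 = x" using assms by simp_all
  then have "x \<in> set (take j L)" "x \<in> set (drop j L)"
    using assms by (metis length_take min.absorb4 nth_mem, metis length_drop nth_mem zero_less_diff)
  then have "0 < count (mset (take j L)) x" "0 < count (mset (drop j L)) x"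
    by (simp_all only: count_mset_gt_0)
  moreover have "count (mset L) x = count (mset (take j L)) x + count (mset (drop j L)) x"
    by (metis append_take_drop_id count_union mset_append)
  ultimately show ?thesis by linarith
qed

lemma sorted_Suc_value_same_parity:
  fixes L :: "nat list"
  assumes s: "sorted L" and k: "k < length L" "L ! k = a" and m: "m < length L" "L ! m = Suc a"
    and par: "even k = even m"
  shows "2 \<le> count (mset L) a \<or> 2 \<le> count (mset L) (Suc a)"
proof -
  have "k < m" using sorted_nth_mono[OF s, of m k] k m by (cases "k < m") auto
  moreover have "m \<noteq> Suc k" using par by auto
  ultimately have km: "Suc k < m" by simp
  then have "a \<le> L ! Suc k" "L ! Suc k \<le> Suc a"
    using sorted_nth_mono[OF s, of k "Suc k"] sorted_nth_mono[OF s, of "Suc k" m] k m by auto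
  then consider "L ! Suc k = a" | "L ! Suc k = Suc a" by linarith
  then show ?thesis
    using two_le_count_if_nth_eq[of k "Suc k" L a] two_le_count_if_nth_eq[of "Suc k" m L "Suc a"]
      k m km by cases auto
qed

lemma parity_part_sort_merge_Suc:
  assumes fin: "finite F" "finite G"
    and "a \<in> parity_part (sort_merge F G) b" "Suc a \<in> parity_part (sort_merge F G) b"
  shows "(a \<in> F \<and> a \<in> G) \<or> (Suc a \<in> F \<and> Suc a \<in> G)"
proof -
  let ?L = "sort_merge F G"
  obtain k where k: "k < length ?L" "?L ! k = a" "even k = b"
    using assms(3) unfolding parity_part_def by auto
  obtain m where m: "m < length ?L" "?L ! m = Suc a" "even m = b"
    using assms(4) unfolding parity_part_def by auto
  have "sorted ?L" by (simp add: sort_merge_def)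
  from sorted_Suc_value_same_parity[OF this k(1,2) m(1,2)] k(3) m(3)
  have "2 \<le> count (mset ?L) a \<or> 2 \<le> count (mset ?L) (Suc a)" by simp
  then show ?thesis unfolding count_sort_merge[OF fin] by (simp add: of_bool_def split: if_splits)
qed

lemma indep_complex_sortable_wrt:
  fixes V :: "nat set"
  assumes fin: "finite V"
    and consec: "\<And>u w. u \<in> V \<Longrightarrow> w \<in> V \<Longrightarrow> adj E u w \<Longrightarrow> w = Suc u \<or> u = Suc w"
  shows "sortable_wrt (indep_complex V E)"
  unfolding sortable_wrt_iff_parity_part
proof (intro ballI allI)
  fix F G b assume F: "F \<in> indep_complex V E" and G: "G \<in> indep_complex V E"
  have FG: "F \<subseteq> V" "G \<subseteq> V" using F G unfolding indep_complex_def by auto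
  have fin_FG: "finite F" "finite G"
    using finite_subset[OF FG(1) fin] finite_subset[OF FG(2) fin] .
  define S where "S = parity_part (sort_merge F G) b"
  have SV: "S \<subseteq> F \<union> G"
    using parity_part_subset[of "sort_merge F G" b] set_sort_merge[OF fin_FG] unfolding S_def by simp
  have no_edge: "\<not> adj E a (Suc a)" if "a \<in> S" "Suc a \<in> S" for a
  proof -
    have "(a \<in> F \<and> Suc a \<in> F) \<or> (a \<in> G \<and> Suc a \<in> G)"
      using parity_part_sort_merge_Suc[OF fin_FG] that SV unfolding S_def by blast
    then show ?thesis using F G unfolding indep_complex_def by blast
  qed
  have "\<not> adj E u w" if "u \<in> S" "w \<in> S" for u w
  proof
    assume uw: "adj E u w"
    have "u \<in> V" "w \<in> V" using that SV FG by auto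
    with uw consider "w = Suc u" | "u = Suc w" using consec by blast
    then show False
      using no_edge[of u] no_edge[of w] that uw adj_commute[of E u w] by cases auto
  qed
  then show "S \<in> indep_complex V E"
    unfolding indep_complex_def using SV FG by blast
qed

lemma sortable_wrt_singleton_triple:
  fixes c :: nat
  assumes sw: "sortable_wrt \<Delta>" and "{c} \<in> \<Delta>" "B \<in> \<Delta>" and B: "card B = 3" "c \<notin> B"
  shows "\<exists>b\<in>B. \<exists>H\<in>\<Delta>. c \<in> H \<and> b \<in> H"
proof -
  define L where "L = sort_merge {c} B"
  have finB: "finite B" using B by (metis card.infinite zero_neq_numeral)
  have setL: "set L = insert c B" unfolding L_def using set_sort_merge[OF _ finB] by simp
  have "length L = size (mset_set {c} + mset_set B)"
    unfolding L_def sort_merge_def by (metis mset_sorted_list_of_multiset size_mset)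
  then have len: "length L = 4" using B by simp
  then have "distinct L" using B finB setL by (intro card_distinct) simp
  obtain p where p: "p < 4" "L ! p = c" using setL len by (metis in_set_conv_nth insertI1)
  define q where "q = (if p < 2 then p + 2 else p - 2)"
  have q: "q < 4" "q \<noteq> p" "even q = even p" unfolding q_def using p by auto
  have "L ! q \<noteq> L ! p" using \<open>distinct L\<close> p(1) q(1,2) len by (simp add: nth_eq_iff_index_eq)
  then have "L ! q \<noteq> c" using p by simp
  then have "L ! q \<in> B" using setL q len nth_mem[of q L] by auto
  moreover have "c \<in> parity_part L (even p)" "L ! q \<in> parity_part L (even p)"
    unfolding parity_part_def using p q len by (auto intro!: exI)
  moreover have "parity_part L (even p) \<in> \<Delta>"
    using sw assms(2,3) unfolding sortable_wrt_iff_parity_part L_def by blast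
  ultimately show ?thesis by blast
qed

lemma adj_image_iff:
  assumes sg: "simple_graph V E" and inj: "inj_on f V" and uw: "u \<in> V" "w \<in> V"
  shows "adj ((\<lambda>e. f ` e) ` E) (f u) (f w) \<longleftrightarrow> adj E u w"
proof
  assume "adj E u w"
  then have "f ` {u, w} \<in> (\<lambda>e. f ` e) ` E" unfolding adj_def by (rule imageI)
  then show "adj ((\<lambda>e. f ` e) ` E) (f u) (f w)" unfolding adj_def by simp
next
  assume "adj ((\<lambda>e. f ` e) ` E) (f u) (f w)"
  then obtain e where e: "e \<in> E" "f ` e = {f u, f w}" unfolding adj_def by auto
  then obtain a b where ab: "e = {a, b}" "a \<in> V" "b \<in> V"
    using sg unfolding simple_graph_def by blast
  then have "{f a, f b} = {f u, f w}" using e by simp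
  then have "{a, b} = {u, w}"
    using inj_onD[OF inj] ab uw by (auto simp: doubleton_eq_iff)
  then show "adj E u w" using e ab unfolding adj_def by simp
qed

lemma indep_complex_image:
  assumes sg: "simple_graph V E" and inj: "inj_on f V"
  shows "(\<lambda>F. f ` F) ` indep_complex V E = indep_complex (f ` V) ((\<lambda>e. f ` e) ` E)"
proof (intro set_eqI iffI)
  fix F' assume "F' \<in> (\<lambda>F. f ` F) ` indep_complex V E"
  then obtain F where F: "F \<subseteq> V" "\<forall>u\<in>F. \<forall>w\<in>F. \<not> adj E u w" and F': "F' = f ` F"
    unfolding indep_complex_def by blast
  have "\<not> adj ((\<lambda>e. f ` e) ` E) (f u) (f w)" if "u \<in> F" "w \<in> F" for u w
    using adj_image_iff[OF sg inj] F that by blast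
  then show "F' \<in> indep_complex (f ` V) ((\<lambda>e. f ` e) ` E)"
    unfolding indep_complex_def F' using F by blast
next
  fix F' assume F': "F' \<in> indep_complex (f ` V) ((\<lambda>e. f ` e) ` E)"
  then obtain F where F: "F \<subseteq> V" "F' = f ` F"
    unfolding indep_complex_def by (auto simp: subset_image_iff)
  have "\<not> adj E u w" if "u \<in> F" "w \<in> F" for u w
    using adj_image_iff[OF sg inj] F F' that unfolding indep_complex_def by blast
  then have "F \<in> indep_complex V E" unfolding indep_complex_def using F by blast
  then show "F' \<in> (\<lambda>F. f ` F) ` indep_complex V E" using F by blast
qed

lemma forest_neighbours_indep:
  assumes F: "forest V E" and cx: "adj E c x" and cy: "adj E c y" and cz: "adj E c z"
  shows "{x, y, z} \<in> indep_complex V E"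
proof -
  have sg: "simple_graph V E" using F unfolding forest_def by blast
  have "\<not> adj E x y" "\<not> adj E x z" "\<not> adj E y z"
    using forest_no_triangle[OF F cx cy] forest_no_triangle[OF F cx cz] forest_no_triangle[OF F cy cz] .
  moreover have "\<not> adj E v v" for v using simple_graph_adjD(3)[OF sg] by blast
  ultimately show ?thesis
    using simple_graph_adjD[OF sg cx] simple_graph_adjD[OF sg cy] simple_graph_adjD[OF sg cz]
    unfolding indep_complex_def by (auto simp: adj_commute)
qed

lemma sortable_indep_complex_degree_le_2:
  assumes F: "forest V E" and S: "sortable V (indep_complex V E)"
    and cx: "adj E c x" and cy: "adj E c y" and cz: "adj E c z"
  shows "x = y \<or> x = z \<or> y = z"
proof (rule ccontr)
  assume "\<not> (x = y \<or> x = z \<or> y = z)"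
  then have xyz: "x \<noteq> y" "x \<noteq> z" "y \<noteq> z" by auto
  have sg: "simple_graph V E" using F unfolding forest_def by blast
  obtain f where inj: "inj_on f V" and sw: "sortable_wrt ((\<lambda>F. f ` F) ` indep_complex V E)"
    using S unfolding sortable_def by blast
  note V = simple_graph_adjD[OF sg cx] simple_graph_adjD[OF sg cy] simple_graph_adjD[OF sg cz]
  have "{c} \<in> indep_complex V E"
    using V simple_graph_adjD(3)[OF sg, of c c] unfolding indep_complex_def by auto
  then have c_in: "{f c} \<in> (\<lambda>F. f ` F) ` indep_complex V E"
    using imageI[of _ _ "\<lambda>F. f ` F"] by fastforce
  have xyz_in: "f ` {x, y, z} \<in> (\<lambda>F. f ` F) ` indep_complex V E"
    using forest_neighbours_indep[OF F cx cy cz] by (rule imageI)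
  have "inj_on f {x, y, z}" by (rule inj_on_subset[OF inj]) (use V in auto)
  then have card: "card (f ` {x, y, z}) = 3" using xyz by (simp add: card_image)
  have "f c \<notin> f ` {x, y, z}" using inj_onD[OF inj] V by auto
  then have "\<exists>b\<in>f ` {x, y, z}. \<exists>H\<in>(\<lambda>F. f ` F) ` indep_complex V E. f c \<in> H \<and> b \<in> H"
    by (rule sortable_wrt_singleton_triple[OF sw c_in xyz_in card])
  then obtain w I where w: "w \<in> {x, y, z}" and I: "I \<in> indep_complex V E" "f c \<in> f ` I" "f w \<in> f ` I"
    by blast
  then have "I \<subseteq> V" unfolding indep_complex_def by blast
  then have "c \<in> I" "w \<in> I" using I w V inj_onD[OF inj] by auto
  moreover have "adj E c w" using w cx cy cz by blast
  ultimately show False using I unfolding indep_complex_def by blast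
qed

definition edges_consecutive :: "'a set set \<Rightarrow> 'a list \<Rightarrow> bool" where
  "edges_consecutive E xs \<longleftrightarrow>
     (\<forall>i<length xs. \<forall>j<length xs. adj E (xs ! i) (xs ! j) \<longrightarrow> i = Suc j \<or> j = Suc i)"

lemma edges_consecutive_append:
  assumes xs: "edges_consecutive E xs" and ys: "edges_consecutive E ys"
    and cross: "\<And>u w. u \<in> set xs \<Longrightarrow> w \<in> set ys \<Longrightarrow> \<not> adj E u w"
  shows "edges_consecutive E (xs @ ys)"
  unfolding edges_consecutive_def
proof (intro allI impI)
  fix i j assume i: "i < length (xs @ ys)" and j: "j < length (xs @ ys)"
    and a: "adj E ((xs @ ys) ! i) ((xs @ ys) ! j)"
  consider "i < length xs" "j < length xs" | "i < length xs" "\<not> j < length xs"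
    | "\<not> i < length xs" "j < length xs" | "\<not> i < length xs" "\<not> j < length xs" by blast
  then show "i = Suc j \<or> j = Suc i"
  proof cases
    case 1
    then show ?thesis using xs a unfolding edges_consecutive_def by (simp add: nth_append)
  next
    case 2
    then show ?thesis using cross a j by (simp add: nth_append)
  next
    case 3
    then show ?thesis using cross a i by (simp add: nth_append adj_commute)
  next
    case 4
    then have "i - length xs = Suc (j - length xs) \<or> j - length xs = Suc (i - length xs)"
      using ys a i j unfolding edges_consecutive_def by (simp add: nth_append)
    then show ?thesis using 4 by auto
  qed
qed

lemma path_components_layout:
  assumes sg: "simple_graph V E" and paths: "\<forall>C\<in>components V E. is_path_graph E C"
  shows "\<exists>L. distinct L \<and> set L = V \<and> edges_consecutive E L"
proof -
  have "finite (components V E)"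
    using sg finite_components unfolding simple_graph_def by blast
  moreover have "\<exists>L. distinct L \<and> set L = \<Union>\<C> \<and> edges_consecutive E L"
    if "finite \<C>" "\<C> \<subseteq> components V E" for \<C>
    using that
  proof (induction \<C> rule: finite_subset_induct')
    case empty
    show ?case by (simp add: edges_consecutive_def)
  next
    case (insert C \<C>)
    obtain L where L: "distinct L" "set L = \<Union>\<C>" "edges_consecutive E L"
      using insert.IH by blast
    have "is_path_graph E C" using paths insert.hyps(2) by blast
    then obtain xs where xs: "distinct xs" "set xs = C" and consec:
        "\<forall>i j. i < length xs \<longrightarrow> j < length xs \<longrightarrow>
          (adj E (xs ! i) (xs ! j) \<longleftrightarrow> i = Suc j \<or> j = Suc i)"
      unfolding is_path_graph_def by blast
    have "edges_consecutive E xs" using consec unfolding edges_consecutive_def by auto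
    have disj: "C \<inter> C' = {}" if "C' \<in> \<C>" for C'
    proof (rule components_disjoint[OF insert.hyps(2)])
      show "C' \<in> components V E" using insert.hyps(3) that by blast
      show "C \<noteq> C'" using insert.hyps(4) that by blast
    qed
    have cross: "\<not> adj E u w" if "u \<in> set xs" "w \<in> set L" for u w
    proof
      assume "adj E u w"
      then have "w \<in> C" using component_adj_closed[OF sg insert.hyps(2)] that xs(2) by blast
      moreover have "w \<in> \<Union>\<C>" using that(2) L(2) by simp
      then obtain C' where "C' \<in> \<C>" "w \<in> C'" by (rule UnionE)
      ultimately show False using disj[OF \<open>C' \<in> \<C>\<close>] \<open>w \<in> C'\<close> by blast
    qed
    have "set xs \<inter> set L = {}" unfolding xs(2) L(2) Int_Union using disj by simp
    then have "distinct (xs @ L)" using xs(1) L(1) by simp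
    moreover have "edges_consecutive E (xs @ L)"
      using \<open>edges_consecutive E xs\<close> L(3) cross by (rule edges_consecutive_append)
    ultimately show ?case using xs(2) L(2) by (intro exI[of _ "xs @ L"]) auto
  qed
  ultimately have "\<exists>L. distinct L \<and> set L = \<Union>(components V E) \<and> edges_consecutive E L"
    by blast
  then show ?thesis unfolding Union_components .
qed

lemma path_components_sortable:
  assumes sg: "simple_graph V E" and paths: "\<forall>C\<in>components V E. is_path_graph E C"
  shows "sortable V (indep_complex V E)"
proof -
  obtain L where L: "distinct L" "set L = V" "edges_consecutive E L"
    using path_components_layout[OF sg paths] by blast
  define f where "f = the_inv_into {..<length L} ((!) L)"
  have bij_nth: "bij_betw ((!) L) {..<length L} V" using bij_betw_nth[OF L(1) refl L(2)[symmetric]] .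
  then have "bij_betw f V {..<length L}" unfolding f_def by (rule bij_betw_the_inv_into)
  then have inj: "inj_on f V" and fV: "f ` V = {..<length L}" unfolding bij_betw_def by blast+
  have f_nth: "f (L ! i) = i" if "i < length L" for i
    using the_inv_into_f_f[OF bij_betw_imp_inj_on[OF bij_nth]] that unfolding f_def by simp
  have "sortable_wrt (indep_complex (f ` V) ((\<lambda>e. f ` e) ` E))"
  proof (rule indep_complex_sortable_wrt)
    show "finite (f ` V)" unfolding fV by simp
    fix i j assume "i \<in> f ` V" "j \<in> f ` V" and a: "adj ((\<lambda>e. f ` e) ` E) i j"
    then have ij: "i < length L" "j < length L" unfolding fV by auto
    then have "L ! i \<in> V" "L ! j \<in> V" using L(2) by auto
    then have "adj E (L ! i) (L ! j)" using adj_image_iff[OF sg inj] a f_nth ij by metis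
    then show "j = Suc i \<or> i = Suc j" using L(3) ij unfolding edges_consecutive_def by auto
  qed
  then show ?thesis
    unfolding sortable_def using inj indep_complex_image[OF sg inj] by metis
qed

theorem corollary1p10:
  fixes V :: "'a set" and E :: "'a set set"
  assumes "forest V E"
  shows "sortable V (indep_complex V E) \<longleftrightarrow> (\<forall>C\<in>components V E. is_path_graph E C)"
proof
  assume "sortable V (indep_complex V E)"
  then show "\<forall>C\<in>components V E. is_path_graph E C"
    using forest_component_is_path_graph[OF assms] sortable_indep_complex_degree_le_2[OF assms]
    by blast
next
  assume "\<forall>C\<in>components V E. is_path_graph E C"
  moreover have "simple_graph V E" using assms unfolding forest_def by blast
  ultimately show "sortable V (indep_complex V E)" using path_components_sortable by blast
qed
end
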